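(* Let $\nu$ be a Borel probability measure on $\operatorname{Diff}^{1+\tau}(\mathbb{S}^1)$ (some $\tau>0$) satisfying $$\int\log\sup_{x}|f'(x)|\,d\nu(f)<\infty\quad\text{and}\quad\int\log\inf_{x}|f'(x)|\,d\nu(f)>-\infty,$$ such that $\Gamma_\nu$ is proximal and does not fix any point in $\mathbb{S}^1$. Then for $\nu^{\mathbb{N}}$-almost every $(f_n)_{n\in\mathbb{N}}\in X_\nu^{\mathbb{N}}$, $$\lim_{n\to\infty}\frac1n\sum_{j=1}^n\alpha_{f_j}(\varepsilon_j)=0$$ for every sequence $(\varepsilon_n)_{n\in\mathbb{N}}$ of positive real numbers converging to $0$.
   Context: $\mathbb{S}^1=\mathbb{R}/\mathbb{Z}$ with usual metric $d$. $\operatorname{Diff}^{1+\tau}(\mathbb{S}^1)$ is the group of $C^1$ diffeomorphisms of $\mathbb{S}^1$ (orientation preserving or reversing) with $\tau$-Hölder derivative. $X_\nu$ is the topological support of $\nu$, $\Gamma_\nu$ the semigroup generated by $X_\nu$; $\Gamma_\nu$ is proximal if for all $x,y$ there exists $(g_n)$ in $\Gamma_\nu$ with $d(g_n(x),g_n(y))\to0$; it does not fix any point if no $x$ satisfies $f(x)=x$ for all $f\in\Gamma_\nu$. $\nu^{\mathbb{N}}$ is the product measure on $X_\nu^{\mathbb{N}}$. For $f\in\operatorname{Diff}^{1+\tau}(\mathbb{S}^1)$ and $\varepsilon>0$, $\alpha_f(\varepsilon)=\sup_{d(x,y)\le\varepsilon}\left|\log\frac{|f'(x)|}{|f'(y)|}\right|$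 is the modulus of continuity of $\log|f'|$. *)

theory Defs
  imports "HOL-Probability.Probability"
begin

text \<open>The circle S^1 = R/Z is modelled by real numbers read modulo 1.
  Its metric: distance to the nearest integer of the difference.\<close>
definition cdist :: "real \<Rightarrow> real \<Rightarrow> real" where
  "cdist x y = \<bar>(x - y) - of_int (round (x - y))\<bar>"

text \<open>A circle map f is represented by its normalized lift F : R -> R
  (F(x+1) = F(x) + 1 or F(x+1) = F(x) - 1, and 0 <= F 0 < 1); this is a
  bijection between circle maps of degree +1/-1 and normalized lifts.\<close>
definition Diff1t :: "real \<Rightarrow> (real \<Rightarrow> real) set" where
  "Diff1t \<tau> = {F. 0 \<le> F 0 \<and> F 0 < 1 \<and>
      ((\<forall>x. F (x + 1) = F x + 1) \<or> (\<forall>x. F (x + 1) = F x - 1)) \<and>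
      (\<exists>F'. (\<forall>x. (F has_real_derivative F' x) (at x)) \<and> continuous_on UNIV F' \<and>
            (\<forall>x. F' x \<noteq> 0) \<and>
            (\<exists>C. \<forall>x y. \<bar>F' x - F' y\<bar> \<le> C * cdist x y powr \<tau>))}"

definition C1dist :: "(real \<Rightarrow> real) \<Rightarrow> (real \<Rightarrow> real) \<Rightarrow> real" where
  "C1dist F G = (SUP x\<in>{0..1}. cdist (F x) (G x)) + (SUP x\<in>{0..1}. \<bar>deriv F x - deriv G x\<bar>)"

definition C1open :: "real \<Rightarrow> (real \<Rightarrow> real) set \<Rightarrow> bool" where
  "C1open \<tau> U \<longleftrightarrow> U \<subseteq> Diff1t \<tau> \<and>
     (\<forall>F\<in>U. \<exists>r>0. \<forall>G\<in>Diff1t \<tau>. C1dist F G < r \<longrightarrow> G \<in> U)"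

definition supp :: "real \<Rightarrow> (real \<Rightarrow> real) measure \<Rightarrow> (real \<Rightarrow> real) set" where
  "supp \<tau> \<nu> = {F \<in> Diff1t \<tau>. \<forall>U. C1open \<tau> U \<and> F \<in> U \<longrightarrow> emeasure \<nu> U > 0}"

inductive_set semigr :: "(real \<Rightarrow> real) set \<Rightarrow> (real \<Rightarrow> real) set" for X where
  gen: "F \<in> X \<Longrightarrow> F \<in> semigr X"
| comp: "F \<in> semigr X \<Longrightarrow> G \<in> semigr X \<Longrightarrow> F \<circ> G \<in> semigr X"

definition proximal :: "(real \<Rightarrow> real) set \<Rightarrow> bool" where
  "proximal \<Gamma> \<longleftrightarrow> (\<forall>x y. \<exists>g::nat \<Rightarrow> real \<Rightarrow> real. (\<forall>n. g n \<in> \<Gamma>) \<and>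
       (\<lambda>n. cdist (g n x) (g n y)) \<longlonglongrightarrow> 0)"

definition fixes_point :: "(real \<Rightarrow> real) set \<Rightarrow> bool" where
  "fixes_point \<Gamma> \<longleftrightarrow> (\<exists>x. \<forall>f\<in>\<Gamma>. cdist (f x) x = 0)"

definition alpha :: "(real \<Rightarrow> real) \<Rightarrow> real \<Rightarrow> real" where
  "alpha F \<epsilon> = (SUP xy\<in>{(x, y). cdist x y \<le> \<epsilon>}.
      \<bar>ln (\<bar>deriv F (fst xy)\<bar> / \<bar>deriv F (snd xy)\<bar>)\<bar>)"

end

theory Submission
  imports Defs "HOL-Library.Periodic_Fun" "HOL-Library.Log_Nat"
begin

text \<open>
  The modulus \<open>alpha F \<delta>\<close> is bounded by \<open>ln (max |F'|) - ln (min |F'|)\<close>, which is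
  \<open>\<nu>\<close>-integrable by the two log-moment hypotheses, and for fixed \<open>\<delta>\<close> the map
  \<open>F \<mapsto> alpha F \<delta>\<close> is continuous for the \<open>C\<^sup>1\<close> topology, hence measurable. Uniform
  continuity of \<open>ln |F'|\<close> on the circle gives \<open>alpha F \<delta> \<longrightarrow> 0\<close> as \<open>\<delta> \<longrightarrow> 0\<close>, so by
  dominated convergence \<open>\<integral> alpha F \<delta> d\<nu> \<longrightarrow> 0\<close>. A one-sided strong law of large numbers
  (truncation, Chebyshev along \<open>n = 2\<^sup>k\<close>, Borel--Cantelli) shows that almost surely the
  averages of \<open>alpha f\<^sub>j \<delta>\<close> are eventually at most \<open>2 (\<integral> alpha F \<delta> d\<nu> + \<delta>)\<close>,
  simultaneously for the countably many scales \<open>\<delta> = 1/(k+1)\<close>. Since \<open>\<epsilon>\<^sub>j \<le> \<delta>\<close> for large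
  \<open>j\<close> and \<open>alpha\<close> is monotone in the scale, the averages of \<open>alpha f\<^sub>j \<epsilon>\<^sub>j\<close> tend to \<open>0\<close>.
\<close>

lemma sum_index_less_le:
  fixes y :: real assumes "0 \<le> y"
  shows "(\<Sum>j<K. if real j < y then 1 else 0 :: real) \<le> y + 1"
proof -
  have "(\<Sum>j<K. if real j < y then 1 else 0 :: real) = real (card ({..<K} \<inter> {j. real j < y}))"
    by (simp add: sum.If_cases)
  also have "card ({..<K} \<inter> {j. real j < y}) \<le> card {..<nat \<lceil>y\<rceil>}"
    by (rule card_mono) (auto simp: zless_nat_eq_int_zless less_ceiling_iff)
  also have "real (card {..<nat \<lceil>y\<rceil>}) \<le> y + 1"
    using assms by simp
  finally show ?thesis by simp
qed

lemma sum_geometric_half_from: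
  "(\<Sum>k<K. if k0 \<le> k then (1/2::real)^k else 0) =
     (if K \<le> k0 then 0 else 2 * (1/2)^k0 - 2 * (1/2)^K)"
  by (induction K) (auto simp: not_less_eq_eq le_Suc_eq)

lemma sum_dyadic_tail_le:
  fixes y :: real assumes "0 \<le> y"
  shows "(\<Sum>k<K. if y \<le> 2^k then y\<^sup>2 / 2^k else 0) \<le> 2 * y"
proof -
  define k0 where "k0 = (LEAST k. y \<le> (2::real)^k)"
  have k0: "y \<le> 2^k0"
    unfolding k0_def by (rule LeastI_ex) (use real_arch_pow[of 2 y] in \<open>auto intro: less_imp_le\<close>)
  have least: "y \<le> 2^k \<Longrightarrow> k0 \<le> k" for k
    unfolding k0_def by (rule Least_le)
  have "(\<Sum>k<K. if y \<le> 2^k then y\<^sup>2 / 2^k else 0) \<le> (\<Sum>k<K. y\<^sup>2 * (if k0 \<le> k then (1/2::real)^k else 0))"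
    using least by (intro sum_mono) (auto simp: power_one_over)
  also have "\<dots> \<le> y\<^sup>2 * (2 * (1/2)^k0)"
    by (auto simp: sum_distrib_left[symmetric] sum_geometric_half_from intro!: mult_left_mono)
  also have "\<dots> = 2 * y * (y / 2^k0)" by (simp add: power2_eq_square power_one_over)
  also have "\<dots> \<le> 2 * y * 1" using k0 assms by (intro mult_left_mono) auto
  finally show ?thesis by simp
qed

lemma eventually_le_linear_of_dyadic:
  fixes s :: "nat \<Rightarrow> real"
  assumes mono: "mono s" and c: "0 \<le> c" and dyadic: "\<forall>\<^sub>F k in sequentially. s (2^k) \<le> 2^k * c"
  shows "\<forall>\<^sub>F n in sequentially. s n \<le> 2 * real n * c"
proof -
  obtain K where K: "\<And>k. K \<le> k \<Longrightarrow> s (2^k) \<le> 2^k * c"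
    using dyadic by (auto simp: eventually_sequentially)
  show ?thesis unfolding eventually_sequentially
  proof (intro exI[of _ "2^K"] allI impI)
    fix n :: nat assume n: "2^K \<le> n"
    define k where "k = ceillog2 n"
    have "K \<le> k" using ceillog2_mono[OF n] by (simp add: k_def)
    have "0 < n" using n by (metis le_zero_eq not_gr_zero power_not_zero zero_neq_numeral)
    have "s n \<le> s (2^k)" using mono le_two_power_ceillog2 by (auto simp: k_def monoD)
    also have "\<dots> \<le> 2^k * c" using K[OF \<open>K \<le> k\<close>] .
    also have "\<dots> \<le> 2 * real n * c"
    proof (rule mult_right_mono[OF _ c])
      have "(2::nat)^k \<le> 2 * n" using two_power_ceillog2_gt[OF \<open>0 < n\<close>] by (simp add: k_def)
      then show "(2::real)^k \<le> 2 * real n" by (metis of_nat_le_iff of_nat_mult of_nat_numeral of_nat_power)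
    qed
    finally show "s n \<le> 2 * real n * c" .
  qed
qed

lemma sum_le_initial_plus_sum:
  fixes f g :: "nat \<Rightarrow> real"
  assumes "\<And>j. N \<le> j \<Longrightarrow> f j \<le> g j" and "\<And>j. 0 \<le> f j" and "\<And>j. 0 \<le> g j"
  shows "(\<Sum>j=1..n. f j) \<le> (\<Sum>j<N. f j) + (\<Sum>j=1..n. g j)"
proof -
  have "(\<Sum>j=1..n. f j) \<le> (\<Sum>j=1..n. (if j < N then f j else 0) + g j)"
    using assms by (intro sum_mono) (simp add: add_increasing2)
  also have "\<dots> = (\<Sum>j\<in>{1..n} \<inter> {..<N}. f j) + (\<Sum>j=1..n. g j)"
    by (simp add: sum.distrib sum.inter_restrict)
  also have "(\<Sum>j\<in>{1..n} \<inter> {..<N}. f j) \<le> (\<Sum>j<N. f j)"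
    using assms by (intro sum_mono2) auto
  finally show ?thesis by simp
qed

lemma eventually_mean_less:
  fixes s :: "nat \<Rightarrow> real"
  assumes "\<forall>\<^sub>F n in sequentially. s n \<le> C + real n * c" and "c < r"
  shows "\<forall>\<^sub>F n in sequentially. s n / real n < r"
proof -
  have "(\<lambda>n. C / real n + c) \<longlonglongrightarrow> 0 + c"
    by (intro tendsto_add lim_const_over_n tendsto_const)
  then have "\<forall>\<^sub>F n in sequentially. C / real n + c < r"
    using \<open>c < r\<close> by (intro order_tendstoD(2)) auto
  with assms(1) eventually_gt_at_top[of 0] show ?thesis
  proof eventually_elim
    case (elim n)
    then have "s n / real n \<le> (C + real n * c) / real n" by (intro divide_right_mono) auto
    also have "\<dots> = C / real n + c" using elim by (simp add: field_simps)
    finally show ?case using elim by linarith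
  qed
qed

lemma mean_tendsto_zero_of_eventual_bounds:
  fixes a :: "nat \<Rightarrow> real \<Rightarrow> real" and \<epsilon> \<delta> c :: "nat \<Rightarrow> real"
  assumes nonneg: "\<And>j d. 0 < d \<Longrightarrow> 0 \<le> a j d"
    and mono: "\<And>j d d'. 0 < d \<Longrightarrow> d \<le> d' \<Longrightarrow> a j d \<le> a j d'"
    and \<epsilon>_pos: "\<And>n. 0 < \<epsilon> n" and \<epsilon>_lim: "\<epsilon> \<longlonglongrightarrow> 0"
    and \<delta>_pos: "\<And>k. 0 < \<delta> k" and c_lim: "c \<longlonglongrightarrow> 0"
    and bound: "\<And>k. \<exists>C. \<forall>\<^sub>F n in sequentially. (\<Sum>j=1..n. a j (\<delta> k)) \<le> C + real n * c k"
  shows "(\<lambda>n. (\<Sum>j=1..n. a j (\<epsilon> j)) / real n) \<longlonglongrightarrow> 0"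
proof (rule order_tendstoI)
  fix r :: real assume "r < 0"
  moreover have "0 \<le> (\<Sum>j=1..n. a j (\<epsilon> j)) / real n" for n
    using nonneg[OF \<epsilon>_pos] by (simp add: sum_nonneg)
  ultimately show "\<forall>\<^sub>F n in sequentially. r < (\<Sum>j=1..n. a j (\<epsilon> j)) / real n"
    by (intro always_eventually allI) (rule less_le_trans)
next
  fix r :: real assume "0 < r"
  obtain k where "c k < r"
    using order_tendstoD(2)[OF c_lim \<open>0 < r\<close>] by (auto simp: eventually_sequentially)
  obtain C where C: "\<forall>\<^sub>F n in sequentially. (\<Sum>j=1..n. a j (\<delta> k)) \<le> C + real n * c k"
    using bound by blast
  obtain N where N: "\<And>j. N \<le> j \<Longrightarrow> \<epsilon> j \<le> \<delta> k"
    using order_tendstoD(2)[OF \<epsilon>_lim \<delta>_pos[of k]] unfolding eventually_sequentially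
    by (meson less_imp_le)
  have split: "(\<Sum>j=1..n. a j (\<epsilon> j)) \<le> (\<Sum>j<N. a j (\<epsilon> j)) + (\<Sum>j=1..n. a j (\<delta> k))" for n
    using N nonneg \<epsilon>_pos \<delta>_pos by (intro sum_le_initial_plus_sum mono) auto
  from C have "\<forall>\<^sub>F n in sequentially. (\<Sum>j=1..n. a j (\<epsilon> j)) \<le> ((\<Sum>j<N. a j (\<epsilon> j)) + C) + real n * c k"
  proof eventually_elim
    case (elim n)
    then show ?case using split[of n] by linarith
  qed
  then show "\<forall>\<^sub>F n in sequentially. (\<Sum>j=1..n. a j (\<epsilon> j)) / real n < r"
    using \<open>c k < r\<close> by (rule eventually_mean_less)
qed

lemma abs_ln_diff_le:
  fixes a b m :: real
  assumes "0 < m" "m \<le> a" "m \<le> b"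
  shows "\<bar>ln a - ln b\<bar> \<le> \<bar>a - b\<bar> / m"
proof -
  have "ln x - ln y \<le> \<bar>a - b\<bar> / m" if "{x, y} = {a, b}" for x y
  proof -
    have "0 < x" "0 < y" "m \<le> y" "\<bar>x - y\<bar> = \<bar>a - b\<bar>"
      using that assms by (auto simp: doubleton_eq_iff abs_minus_commute)
    then have "ln x - ln y \<le> (x - y) / y" by (intro ln_diff_le)
    also have "\<dots> \<le> \<bar>x - y\<bar> / y" using \<open>0 < y\<close> by (intro divide_right_mono) auto
    also have "\<dots> \<le> \<bar>a - b\<bar> / m"
      using \<open>m \<le> y\<close> \<open>\<bar>x - y\<bar> = \<bar>a - b\<bar>\<close> assms(1) by (simp add: divide_left_mono)
    finally show ?thesis .
  qed
  from this[of a b] this[of b a] show ?thesis by (auto simp: abs_le_iff)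
qed

lemma abs_SUP_diff_le:
  fixes f g :: "'a \<Rightarrow> real"
  assumes "X \<noteq> {}" "bdd_above (f ` X)" "bdd_above (g ` X)" "\<And>x. x \<in> X \<Longrightarrow> \<bar>f x - g x\<bar> \<le> e"
  shows "\<bar>(SUP x\<in>X. f x) - (SUP x\<in>X. g x)\<bar> \<le> e"
proof -
  have "f x \<le> (SUP x\<in>X. g x) + e" "g x \<le> (SUP x\<in>X. f x) + e" if "x \<in> X" for x
    using cSUP_upper[OF that assms(2)] cSUP_upper[OF that assms(3)] assms(4)[OF that] by linarith+
  then have "(SUP x\<in>X. f x) \<le> (SUP x\<in>X. g x) + e" "(SUP x\<in>X. g x) \<le> (SUP x\<in>X. f x) + e"
    by (auto intro!: cSUP_least assms(1))
  then show ?thesis by linarith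
qed

lemma abs_INF_diff_le:
  fixes f g :: "'a \<Rightarrow> real"
  assumes "X \<noteq> {}" "bdd_below (f ` X)" "bdd_below (g ` X)" "\<And>x. x \<in> X \<Longrightarrow> \<bar>f x - g x\<bar> \<le> e"
  shows "\<bar>(INF x\<in>X. f x) - (INF x\<in>X. g x)\<bar> \<le> e"
proof -
  have "(INF x\<in>X. g x) - e \<le> f x" "(INF x\<in>X. f x) - e \<le> g x" if "x \<in> X" for x
    using cINF_lower[OF assms(2) that] cINF_lower[OF assms(3) that] assms(4)[OF that] by linarith+
  then have "(INF x\<in>X. g x) - e \<le> (INF x\<in>X. f x)" "(INF x\<in>X. f x) - e \<le> (INF x\<in>X. g x)"
    by (auto intro!: cINF_greatest assms(1))
  then show ?thesis by linarith
qed

section \<open>Variance of independent sums and coordinates of product spaces\<close>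

lemma (in prob_space) variance_sum_indep:
  fixes X :: "'i \<Rightarrow> 'a \<Rightarrow> real"
  assumes I: "finite I" and indep: "indep_vars (\<lambda>_. borel) X I"
    and sq_int: "\<And>i. i \<in> I \<Longrightarrow> integrable M (\<lambda>x. (X i x)\<^sup>2)"
  shows "variance (\<lambda>x. \<Sum>i\<in>I. X i x) = (\<Sum>i\<in>I. variance (X i))"
proof -
  have rv[measurable]: "X i \<in> borel_measurable M" if "i \<in> I" for i
    using indep that unfolding indep_vars_def2 by simp
  have int: "integrable M (X i)" if "i \<in> I" for i
    using square_integrable_imp_integrable[OF rv sq_int] that by simp
  have cross: "integrable M (\<lambda>x. X i x * X j x) \<and>
      expectation (\<lambda>x. X i x * X j x) = expectation (X i) * expectation (X j)"
    if "i \<in> I" "j \<in> I" "i \<noteq> j" for i j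
  proof -
    have "indep_vars (\<lambda>_. borel) X {i, j}"
      by (rule indep_vars_subset[OF indep]) (use that in auto)
    from indep_vars_lebesgue_integral[OF _ this] indep_vars_integrable[OF _ this]
    show ?thesis using that int by auto
  qed
  have prod_int: "integrable M (\<lambda>x. X i x * X j x)" if "i \<in> I" "j \<in> I" for i j
    using cross[OF that] sq_int[OF that(1)] by (cases "i = j") (auto simp: power2_eq_square)
  have sq: "(\<Sum>i\<in>I. X i x)\<^sup>2 = (\<Sum>i\<in>I. \<Sum>j\<in>I. X i x * X j x)" for x
    by (simp add: power2_eq_square sum_product)
  have "variance (\<lambda>x. \<Sum>i\<in>I. X i x) =
      expectation (\<lambda>x. (\<Sum>i\<in>I. X i x)\<^sup>2) - (expectation (\<lambda>x. \<Sum>i\<in>I. X i x))\<^sup>2"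
    by (rule variance_eq) (auto simp: sq intro!: int prod_int)
  also have "\<dots> = (\<Sum>i\<in>I. \<Sum>j\<in>I. expectation (\<lambda>x. X i x * X j x) - expectation (X i) * expectation (X j))"
    by (simp add: sq int prod_int power2_eq_square sum_product sum_subtractf)
  also have "\<dots> = (\<Sum>i\<in>I. expectation (\<lambda>x. (X i x)\<^sup>2) - (expectation (X i))\<^sup>2)"
  proof (rule sum.cong[OF refl])
    fix i assume i: "i \<in> I"
    have "(\<Sum>j\<in>I. expectation (\<lambda>x. X i x * X j x) - expectation (X i) * expectation (X j)) =
        (\<Sum>j\<in>I. if j = i then expectation (\<lambda>x. (X i x)\<^sup>2) - (expectation (X i))\<^sup>2 else 0)"
      by (rule sum.cong) (auto simp: cross i power2_eq_square)
    then show "(\<Sum>j\<in>I. expectation (\<lambda>x. X i x * X j x) - expectation (X i) * expectation (X j)) =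
        expectation (\<lambda>x. (X i x)\<^sup>2) - (expectation (X i))\<^sup>2"
      using I i by simp
  qed
  also have "\<dots> = (\<Sum>i\<in>I. variance (X i))"
    by (intro sum.cong refl variance_eq[symmetric] int sq_int)
  finally show ?thesis .
qed

lemma (in prob_space) variance_le_second_moment:
  fixes X :: "'a \<Rightarrow> real"
  assumes "integrable M X" and "integrable M (\<lambda>x. (X x)\<^sup>2)"
  shows "variance X \<le> expectation (\<lambda>x. (X x)\<^sup>2)"
  using variance_eq[OF assms] by simp

lemma (in product_prob_space) indep_vars_PiM_components:
  "prob_space.indep_vars (\<Pi>\<^sub>M i\<in>I. M i) M (\<lambda>i \<omega>. \<omega> i) I"
proof (cases "I = {}")
  case False
  interpret P: prob_space "\<Pi>\<^sub>M i\<in>I. M i" by (rule P.prob_space_axioms)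
  have "distr (\<Pi>\<^sub>M i\<in>I. M i) (\<Pi>\<^sub>M i\<in>I. M i) (\<lambda>\<omega>. restrict \<omega> I) = (\<Pi>\<^sub>M i\<in>I. M i)"
    by (subst distr_cong[OF refl refl, where g="\<lambda>\<omega>. \<omega>"]) (auto simp: space_PiM)
  then show ?thesis
    using False PiM_component by (subst P.indep_vars_iff_distr_eq_PiM') (auto cong: PiM_cong)
qed (simp add: prob_space.indep_vars_def prob_space.indep_sets_def prob_space_P)

lemma (in product_prob_space) integral_PiM_component:
  fixes f :: "'a \<Rightarrow> real"
  assumes "i \<in> I" and [measurable]: "f \<in> borel_measurable (M i)"
  shows "(\<integral>\<omega>. f (\<omega> i) \<partial>(\<Pi>\<^sub>M i\<in>I. M i)) = (\<integral>x. f x \<partial>M i)"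
  using integral_distr[of "\<lambda>\<omega>. \<omega> i" "\<Pi>\<^sub>M i\<in>I. M i" "M i" f] PiM_component[OF assms(1)] assms
  by simp

lemma (in product_prob_space) integrable_PiM_component:
  fixes f :: "'a \<Rightarrow> real"
  assumes "i \<in> I" and "integrable (M i) f"
  shows "integrable (\<Pi>\<^sub>M i\<in>I. M i) (\<lambda>\<omega>. f (\<omega> i))"
  using integrable_distr_eq[of "\<lambda>\<omega>. \<omega> i" "\<Pi>\<^sub>M i\<in>I. M i" "M i" f] PiM_component[OF assms(1)] assms
  by simp

lemma (in product_prob_space) measure_PiM_component:
  assumes "i \<in> I" and "A \<in> sets (M i)"
  shows "measure (\<Pi>\<^sub>M i\<in>I. M i) {\<omega>\<in>space (\<Pi>\<^sub>M i\<in>I. M i). \<omega> i \<in> A} = measure (M i) A"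
  using measure_distr[of "\<lambda>\<omega>. \<omega> i" "\<Pi>\<^sub>M i\<in>I. M i" "M i" A] PiM_component[OF assms(1)] assms
  by (simp add: vimage_def Int_def conj_commute)

section \<open>A one-sided strong law for nonnegative i.i.d. variables\<close>

locale nonneg_iid = prob_space M for M :: "'a measure" +
  fixes Y :: "'a \<Rightarrow> real"
  assumes Y_borel[measurable]: "Y \<in> borel_measurable M"
    and Y_nonneg: "\<And>x. x \<in> space M \<Longrightarrow> 0 \<le> Y x"
    and Y_integrable: "integrable M Y"
begin

sublocale Seq: product_prob_space "\<lambda>_::nat. M" UNIV ..

abbreviation P :: "(nat \<Rightarrow> 'a) measure" where
  "P \<equiv> \<Pi>\<^sub>M i\<in>UNIV. M"

lemma space_P_component: "\<omega> \<in> space P \<Longrightarrow> \<omega> j \<in> space M"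
  by (auto simp: space_PiM)

definition truncation :: "nat \<Rightarrow> 'a \<Rightarrow> real" where
  "truncation n x = (if Y x \<le> real n then Y x else 0)"

definition truncated_sum :: "nat \<Rightarrow> (nat \<Rightarrow> 'a) \<Rightarrow> real" where
  "truncated_sum n \<omega> = (\<Sum>j=1..n. truncation j (\<omega> j))"

lemma truncation_borel[measurable]: "truncation n \<in> borel_measurable M"
  unfolding truncation_def by measurable

lemma truncated_sum_borel[measurable]: "truncated_sum n \<in> borel_measurable P"
  unfolding truncated_sum_def by measurable

lemma truncation_nonneg: "x \<in> space M \<Longrightarrow> 0 \<le> truncation n x"
  and truncation_le_index: "x \<in> space M \<Longrightarrow> truncation n x \<le> real n"
  and truncation_le: "x \<in> space M \<Longrightarrow> truncation n x \<le> Y x"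
  and truncation_mono: "x \<in> space M \<Longrightarrow> m \<le> n \<Longrightarrow> truncation m x \<le> truncation n x"
  using Y_nonneg[of x] by (auto simp: truncation_def)

lemma integrable_truncation_power: "integrable M (\<lambda>x. truncation n x ^ k)"
  by (rule integrable_const_bound[where B="real n ^ k"])
     (auto simp: truncation_nonneg truncation_le_index power_mono)

lemma truncated_sum_nonneg: "\<omega> \<in> space P \<Longrightarrow> 0 \<le> truncated_sum n \<omega>"
  unfolding truncated_sum_def by (intro sum_nonneg truncation_nonneg space_P_component)

lemma truncated_sum_mono: "\<omega> \<in> space P \<Longrightarrow> m \<le> n \<Longrightarrow> truncated_sum m \<omega> \<le> truncated_sum n \<omega>"
  unfolding truncated_sum_def
  by (rule sum_mono2) (auto intro: truncation_nonneg space_P_component)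

lemma integrable_truncated_sum_sq: "integrable P (\<lambda>\<omega>. (truncated_sum n \<omega>)\<^sup>2)"
proof (rule Seq.P.integrable_const_bound[where B="(real n * real n)\<^sup>2"], rule AE_I2)
  fix \<omega> assume \<omega>: "\<omega> \<in> space P"
  have "truncated_sum n \<omega> \<le> (\<Sum>j=1..n. real n)"
    unfolding truncated_sum_def using truncation_le_index space_P_component[OF \<omega>]
    by (intro sum_mono) (force intro: order_trans[OF truncation_le_index])
  then show "norm ((truncated_sum n \<omega>)\<^sup>2) \<le> (real n * real n)\<^sup>2"
    using truncated_sum_nonneg[OF \<omega>] by (auto intro!: power_mono)
qed simp

lemma expectation_truncated_sum_le:
  "Seq.P.expectation (truncated_sum n) \<le> real n * expectation Y"
proof -
  have "Seq.P.expectation (truncated_sum n) = (\<Sum>j=1..n. expectation (truncation j))"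
    unfolding truncated_sum_def using integrable_truncation_power[of _ 1]
    by (simp add: Bochner_Integration.integral_sum Seq.integrable_PiM_component Seq.integral_PiM_component)
  also have "\<dots> \<le> (\<Sum>j=1..n. expectation Y)"
    by (intro sum_mono integral_mono Y_integrable) (auto simp: truncation_le integrable_truncation_power[of _ 1, simplified])
  finally show ?thesis by simp
qed

lemma variance_truncated_sum_le:
  "Seq.P.variance (truncated_sum n) \<le> real n * expectation (\<lambda>x. (truncation n x)\<^sup>2)"
proof -
  have indep: "Seq.P.indep_vars (\<lambda>_. borel) (\<lambda>j \<omega>. truncation j (\<omega> j)) {1..n}"
    by (rule Seq.P.indep_vars_compose2[OF Seq.P.indep_vars_subset[OF Seq.indep_vars_PiM_components]]) auto
  have "Seq.P.variance (truncated_sum n) = (\<Sum>j=1..n. Seq.P.variance (\<lambda>\<omega>. truncation j (\<omega> j)))"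
    unfolding truncated_sum_def
    by (rule Seq.P.variance_sum_indep[OF _ indep])
       (auto intro: Seq.integrable_PiM_component integrable_truncation_power)
  also have "\<dots> \<le> (\<Sum>j=1..n. expectation (\<lambda>x. (truncation n x)\<^sup>2))"
  proof (rule sum_mono)
    fix j assume j: "j \<in> {1..n}"
    have "Seq.P.variance (\<lambda>\<omega>. truncation j (\<omega> j)) \<le> Seq.P.expectation (\<lambda>\<omega>. (truncation j (\<omega> j))\<^sup>2)"
      using integrable_truncation_power[of j 1]
      by (intro Seq.P.variance_le_second_moment Seq.integrable_PiM_component integrable_truncation_power) auto
    also have "\<dots> = expectation (\<lambda>x. (truncation j x)\<^sup>2)"
      by (rule Seq.integral_PiM_component) auto
    also have "\<dots> \<le> expectation (\<lambda>x. (truncation n x)\<^sup>2)"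
      using j by (intro integral_mono integrable_truncation_power)
        (auto intro!: power_mono truncation_mono truncation_nonneg)
    finally show "Seq.P.variance (\<lambda>\<omega>. truncation j (\<omega> j)) \<le> expectation (\<lambda>x. (truncation n x)\<^sup>2)" .
  qed
  finally show ?thesis by simp
qed

lemma prob_truncated_sum_large:
  assumes "\<eta> > 0" and "n > 0"
  shows "Seq.P.prob {\<omega>\<in>space P. real n * (expectation Y + \<eta>) < truncated_sum n \<omega>}
    \<le> expectation (\<lambda>x. (truncation n x)\<^sup>2) / (real n * \<eta>\<^sup>2)"
proof -
  have "Seq.P.prob {\<omega>\<in>space P. real n * (expectation Y + \<eta>) < truncated_sum n \<omega>}
      \<le> Seq.P.prob {\<omega>\<in>space P. real n * \<eta> \<le> \<bar>truncated_sum n \<omega> - Seq.P.expectation (truncated_sum n)\<bar>}"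
    using expectation_truncated_sum_le[of n]
    by (intro Seq.P.finite_measure_mono) (auto simp: algebra_simps)
  also have "\<dots> \<le> Seq.P.variance (truncated_sum n) / (real n * \<eta>)\<^sup>2"
    using assms by (intro Seq.P.Chebyshev_inequality integrable_truncated_sum_sq) auto
  also have "\<dots> \<le> real n * expectation (\<lambda>x. (truncation n x)\<^sup>2) / (real n * \<eta>)\<^sup>2"
    by (intro divide_right_mono variance_truncated_sum_le) simp
  also have "\<dots> = expectation (\<lambda>x. (truncation n x)\<^sup>2) / (real n * \<eta>\<^sup>2)"
    using assms by (simp add: power2_eq_square)
  finally show ?thesis .
qed

lemma summable_truncation_sq_dyadic:
  "summable (\<lambda>k. expectation (\<lambda>x. (truncation (2^k) x)\<^sup>2) / 2^k)"
proof (rule summableI_nonneg_bounded[where x="2 * expectation Y"])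
  fix K
  have "(\<Sum>k<K. expectation (\<lambda>x. (truncation (2^k) x)\<^sup>2) / 2^k)
      = expectation (\<lambda>x. \<Sum>k<K. (truncation (2^k) x)\<^sup>2 / 2^k)"
    by (subst Bochner_Integration.integral_sum) (auto intro: integrable_truncation_power)
  also have "\<dots> \<le> expectation (\<lambda>x. 2 * Y x)"
  proof (rule integral_mono)
    fix x assume x: "x \<in> space M"
    have "(\<Sum>k<K. (truncation (2^k) x)\<^sup>2 / 2^k) = (\<Sum>k<K. if Y x \<le> 2^k then (Y x)\<^sup>2 / 2^k else 0)"
      by (intro sum.cong) (auto simp: truncation_def)
    also have "\<dots> \<le> 2 * Y x"
      by (rule sum_dyadic_tail_le[OF Y_nonneg[OF x]])
    finally show "(\<Sum>k<K. (truncation (2^k) x)\<^sup>2 / 2^k) \<le> 2 * Y x" .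
  qed (use Y_integrable integrable_truncation_power in auto)
  finally show "(\<Sum>k<K. expectation (\<lambda>x. (truncation (2^k) x)\<^sup>2) / 2^k) \<le> 2 * expectation Y"
    by simp
qed simp

lemma summable_prob_exceeds_index:
  "summable (\<lambda>j. prob {x\<in>space M. real j < Y x})"
proof (rule summableI_nonneg_bounded[where x="expectation Y + 1"])
  fix K
  have int: "integrable M (\<lambda>x. if real j < Y x then 1 else 0 :: real)" for j
    by (rule integrable_const_bound[where B=1]) auto
  have "prob {x\<in>space M. real j < Y x} = expectation (indicator {x. real j < Y x})" for j
    by (simp add: Collect_conj_eq Int_commute)
  also have "\<dots> j = expectation (\<lambda>x. if real j < Y x then 1 else 0)" for j
    by (intro arg_cong[where f="integral\<^sup>L M"] ext) (simp add: indicator_def)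
  finally have "(\<Sum>j<K. prob {x\<in>space M. real j < Y x})
      = expectation (\<lambda>x. \<Sum>j<K. if real j < Y x then 1 else 0)"
    by (simp add: Bochner_Integration.integral_sum int)
  also have "\<dots> \<le> expectation (\<lambda>x. Y x + 1)"
    using Y_integrable int
    by (intro integral_mono sum_index_less_le Y_nonneg) auto
  finally show "(\<Sum>j<K. prob {x\<in>space M. real j < Y x}) \<le> expectation Y + 1"
    using Y_integrable by (simp add: prob_space)
qed simp

lemma AE_eventually_le_index:
  "AE \<omega> in P. \<forall>\<^sub>F j in sequentially. Y (\<omega> j) \<le> real j"
proof -
  have "{\<omega>\<in>space P. real j < Y (\<omega> j)} = {\<omega>\<in>space P. \<omega> j \<in> {x\<in>space M. real j < Y x}}" for j
    using space_P_component by auto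
  then have "Seq.P.prob {\<omega>\<in>space P. real j < Y (\<omega> j)} = prob {x\<in>space M. real j < Y x}" for j
    by (simp only:) (rule Seq.measure_PiM_component, auto)
  then have "AE \<omega> in P. \<forall>\<^sub>F j in sequentially. \<omega> \<in> space P - {\<omega>\<in>space P. real j < Y (\<omega> j)}"
    using summable_prob_exceeds_index
    by (intro borel_cantelli_AE1) (auto simp: Seq.P.emeasure_finite less_top[symmetric])
  then show ?thesis
    by (rule eventually_mono) (auto elim!: eventually_mono)
qed

lemma AE_eventually_truncated_sum_dyadic_le:
  assumes "\<eta> > 0"
  shows "AE \<omega> in P. \<forall>\<^sub>F k in sequentially. truncated_sum (2^k) \<omega> \<le> 2^k * (expectation Y + \<eta>)"
proof -
  define B where "B k = {\<omega>\<in>space P. real (2^k) * (expectation Y + \<eta>) < truncated_sum (2^k) \<omega>}" for k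
  have "summable (\<lambda>k. Seq.P.prob (B k))"
  proof (rule summable_comparison_test')
    show "summable (\<lambda>k. expectation (\<lambda>x. (truncation (2^k) x)\<^sup>2) / 2^k / \<eta>\<^sup>2)"
      using summable_truncation_sq_dyadic by (rule summable_divide)
    show "norm (Seq.P.prob (B k)) \<le> expectation (\<lambda>x. (truncation (2^k) x)\<^sup>2) / 2^k / \<eta>\<^sup>2" for k
      using prob_truncated_sum_large[OF assms, of "2^k"] by (simp add: B_def field_simps)
  qed
  then have "AE \<omega> in P. \<forall>\<^sub>F k in sequentially. \<omega> \<in> space P - B k"
    by (intro borel_cantelli_AE1) (auto simp: B_def Seq.P.emeasure_finite less_top[symmetric])
  then show ?thesis
    by (rule eventually_mono) (auto simp: B_def elim!: eventually_mono)
qed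

lemma AE_partial_sums_le_linear:
  assumes "\<eta> > 0"
  shows "AE \<omega> in P. \<exists>C. \<forall>\<^sub>F n in sequentially.
    (\<Sum>j=1..n. Y (\<omega> j)) \<le> C + 2 * real n * (expectation Y + \<eta>)"
  using AE_eventually_le_index AE_eventually_truncated_sum_dyadic_le[OF assms] AE_space
proof eventually_elim
  case (elim \<omega>)
  obtain N where N: "\<And>j. N \<le> j \<Longrightarrow> Y (\<omega> j) \<le> real j"
    using elim(1) by (auto simp: eventually_sequentially)
  define C where "C = (\<Sum>j<N. Y (\<omega> j))"
  have split: "(\<Sum>j=1..n. Y (\<omega> j)) \<le> C + truncated_sum n \<omega>" for n
    unfolding C_def truncated_sum_def
  proof (rule sum_le_initial_plus_sum)
    show "Y (\<omega> j) \<le> truncation j (\<omega> j)" if "N \<le> j" for j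
      using N[OF that] by (simp add: truncation_def)
  qed (use Y_nonneg truncation_nonneg space_P_component[OF elim(3)] in auto)
  have "0 \<le> expectation Y + \<eta>"
    using assms Y_nonneg by (simp add: add_nonneg_pos integral_nonneg_AE less_imp_le)
  then have "\<forall>\<^sub>F n in sequentially. truncated_sum n \<omega> \<le> 2 * real n * (expectation Y + \<eta>)"
    using elim(2) truncated_sum_mono[OF elim(3)]
    by (intro eventually_le_linear_of_dyadic) (auto simp: mono_def)
  then show ?case
  proof (intro exI[of _ C], elim eventually_mono)
    fix n assume "truncated_sum n \<omega> \<le> 2 * real n * (expectation Y + \<eta>)"
    then show "(\<Sum>j=1..n. Y (\<omega> j)) \<le> C + 2 * real n * (expectation Y + \<eta>)"
      using split[of n] by linarith
  qed
qed

end

section \<open>Derivatives of circle diffeomorphisms and the modulus \<open>alpha\<close>\<close>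

lemma cdist_nonneg: "0 \<le> cdist x y"
  by (simp add: cdist_def)

lemma cdist_le_half: "cdist x y \<le> 1/2"
  unfolding cdist_def abs_le_iff using of_int_round_ge[of "x - y"] of_int_round_le[of "x - y"] by linarith

lemma cdist_self[simp]: "cdist x x = 0"
  by (simp add: cdist_def)

lemma Diff1t_deriv:
  assumes "F \<in> Diff1t \<tau>"
  shows Diff1t_continuous_deriv: "continuous_on UNIV (deriv F)"
    and Diff1t_deriv_nonzero: "deriv F x \<noteq> 0"
    and Diff1t_deriv_periodic: "deriv F (x + 1) = deriv F x"
proof -
  from assms obtain F' where der: "\<And>x. (F has_real_derivative F' x) (at x)"
    and cont: "continuous_on UNIV F'" and nz: "\<And>x. F' x \<noteq> 0"
    and shift: "(\<forall>x. F (x + 1) = F x + 1) \<or> (\<forall>x. F (x + 1) = F x - 1)"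
    unfolding Diff1t_def by blast
  have F': "deriv F = F'" using der by (intro ext DERIV_imp_deriv)
  show "continuous_on UNIV (deriv F)" "deriv F x \<noteq> 0"
    using cont nz by (simp_all add: F')
  obtain c where c: "\<And>x. F (x + 1) = F x + c" using shift by (metis diff_conv_add_uminus)
  have "((\<lambda>x. F (x + 1)) has_real_derivative F' (x + 1)) (at x)"
    using der[of "x + 1"] by (simp add: DERIV_shift)
  moreover have "((\<lambda>x. F (x + 1)) has_real_derivative F' x) (at x)"
    unfolding c using der[of x] by (auto intro!: derivative_eq_intros)
  ultimately show "deriv F (x + 1) = deriv F x" unfolding F' by (rule DERIV_unique)
qed

lemma Diff1t_deriv_plus_of_int:
  assumes "F \<in> Diff1t \<tau>"
  shows "deriv F (x + of_int n) = deriv F x"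
proof -
  interpret periodic_fun_simple' "deriv F"
    by standard (rule Diff1t_deriv_periodic[OF assms])
  show ?thesis by (rule plus_of_int)
qed

lemma Diff1t_deriv_frac: "F \<in> Diff1t \<tau> \<Longrightarrow> deriv F (frac x) = deriv F x"
  using Diff1t_deriv_plus_of_int[of F \<tau> x "- \<lfloor>x\<rfloor>"] by (simp add: frac_def)

lemma frac_in_unit_interval: "frac x \<in> {0..1}"
  using frac_lt_1[of x] frac_ge_0[of x] by auto

lemma Diff1t_abs_deriv_extrema:
  assumes F: "F \<in> Diff1t \<tau>"
  obtains a b where "\<And>x. \<bar>deriv F x\<bar> \<le> \<bar>deriv F a\<bar>" and "\<And>x. \<bar>deriv F b\<bar> \<le> \<bar>deriv F x\<bar>"
proof -
  have c: "continuous_on {0..1} (\<lambda>x. \<bar>deriv F x\<bar>)"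
    by (intro continuous_intros continuous_on_subset[OF Diff1t_continuous_deriv[OF F]]) auto
  obtain a where a: "\<And>y. y \<in> {0..1} \<Longrightarrow> \<bar>deriv F y\<bar> \<le> \<bar>deriv F a\<bar>"
    using continuous_attains_sup[OF compact_Icc _ c] by blast
  obtain b where b: "\<And>y. y \<in> {0..1} \<Longrightarrow> \<bar>deriv F b\<bar> \<le> \<bar>deriv F y\<bar>"
    using continuous_attains_inf[OF compact_Icc _ c] by blast
  show ?thesis
  proof (rule that)
    show "\<bar>deriv F x\<bar> \<le> \<bar>deriv F a\<bar>" "\<bar>deriv F b\<bar> \<le> \<bar>deriv F x\<bar>" for x
      using a[OF frac_in_unit_interval] b[OF frac_in_unit_interval] by (simp_all add: Diff1t_deriv_frac[OF F])
  qed
qed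

definition max_abs_deriv :: "(real \<Rightarrow> real) \<Rightarrow> real" where
  "max_abs_deriv F = (SUP x. \<bar>deriv F x\<bar>)"

definition min_abs_deriv :: "(real \<Rightarrow> real) \<Rightarrow> real" where
  "min_abs_deriv F = (INF x. \<bar>deriv F x\<bar>)"

lemma bdd_above_abs_deriv:
  assumes "F \<in> Diff1t \<tau>"
  shows "bdd_above (range (\<lambda>x. \<bar>deriv F x\<bar>))"
proof -
  obtain a b where "\<And>x. \<bar>deriv F x\<bar> \<le> \<bar>deriv F a\<bar>" and "\<And>x. \<bar>deriv F b\<bar> \<le> \<bar>deriv F x\<bar>"
    using Diff1t_abs_deriv_extrema[OF assms] by blast
  then show ?thesis by (intro bdd_aboveI2)
qed

lemma bdd_below_abs_deriv: "bdd_below (range (\<lambda>x. \<bar>deriv F x :: real\<bar>))"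
  by (meson abs_ge_zero bdd_belowI2)

lemma abs_deriv_le_max: "F \<in> Diff1t \<tau> \<Longrightarrow> \<bar>deriv F x\<bar> \<le> max_abs_deriv F"
  unfolding max_abs_deriv_def by (rule cSUP_upper[OF UNIV_I bdd_above_abs_deriv])

lemma min_le_abs_deriv: "min_abs_deriv F \<le> \<bar>deriv F x\<bar>"
  unfolding min_abs_deriv_def by (rule cINF_lower[OF bdd_below_abs_deriv UNIV_I])

lemma min_abs_deriv_pos:
  assumes F: "F \<in> Diff1t \<tau>"
  shows "0 < min_abs_deriv F"
proof -
  obtain a b where "\<And>x. \<bar>deriv F x\<bar> \<le> \<bar>deriv F a\<bar>" and b: "\<And>x. \<bar>deriv F b\<bar> \<le> \<bar>deriv F x\<bar>"
    using Diff1t_abs_deriv_extrema[OF F] by blast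
  have "\<bar>deriv F b\<bar> \<le> min_abs_deriv F"
    unfolding min_abs_deriv_def by (rule cINF_greatest) (use b in auto)
  then show ?thesis using Diff1t_deriv_nonzero[OF F, of b] by linarith
qed

lemma cdist_le_nonempty: "0 \<le> \<delta> \<Longrightarrow> {(x, y). cdist x y \<le> \<delta>} \<noteq> {}"
  by auto (metis cdist_self)

lemma abs_ln_deriv_ratio:
  assumes "F \<in> Diff1t \<tau>"
  shows "\<bar>ln (\<bar>deriv F x\<bar> / \<bar>deriv F y\<bar>)\<bar> = \<bar>ln (\<bar>deriv F x\<bar>) - ln (\<bar>deriv F y\<bar>)\<bar>"
  using Diff1t_deriv_nonzero[OF assms] by (simp add: ln_div)

lemma abs_ln_deriv_ratio_le:
  assumes F: "F \<in> Diff1t \<tau>"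
  shows "\<bar>ln (\<bar>deriv F x\<bar> / \<bar>deriv F y\<bar>)\<bar> \<le> ln (max_abs_deriv F) - ln (min_abs_deriv F)"
proof -
  have "ln (min_abs_deriv F) \<le> ln \<bar>deriv F z\<bar>" "ln \<bar>deriv F z\<bar> \<le> ln (max_abs_deriv F)" for z
    using min_abs_deriv_pos[OF F] min_le_abs_deriv[of F z] abs_deriv_le_max[OF F, of z] by auto
  from this[of x] this[of y] show ?thesis
    unfolding abs_ln_deriv_ratio[OF F] abs_le_iff by linarith
qed

lemma bdd_above_alpha_image:
  assumes "F \<in> Diff1t \<tau>"
  shows "bdd_above ((\<lambda>xy. \<bar>ln (\<bar>deriv F (fst xy)\<bar> / \<bar>deriv F (snd xy)\<bar>)\<bar>) ` S)"
  by (rule bdd_aboveI2) (rule abs_ln_deriv_ratio_le[OF assms])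

lemma alpha_nonneg:
  assumes F: "F \<in> Diff1t \<tau>" and "0 \<le> \<delta>"
  shows "0 \<le> alpha F \<delta>"
proof -
  have "\<bar>ln (\<bar>deriv F 0\<bar> / \<bar>deriv F 0\<bar>)\<bar> \<le> alpha F \<delta>"
    unfolding alpha_def
    by (rule cSUP_upper2[OF bdd_above_alpha_image[OF F], of "(0, 0)"]) (use assms in auto)
  then show ?thesis using Diff1t_deriv_nonzero[OF F, of 0] by simp
qed

lemma alpha_le_ln_max_min:
  assumes "F \<in> Diff1t \<tau>" and "0 \<le> \<delta>"
  shows "alpha F \<delta> \<le> ln (max_abs_deriv F) - ln (min_abs_deriv F)"
  unfolding alpha_def
  by (rule cSUP_least[OF cdist_le_nonempty[OF assms(2)]]) (rule abs_ln_deriv_ratio_le[OF assms(1)])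

lemma alpha_mono:
  assumes "F \<in> Diff1t \<tau>" and "0 \<le> \<delta>" "\<delta> \<le> \<delta>'"
  shows "alpha F \<delta> \<le> alpha F \<delta>'"
  unfolding alpha_def
  by (rule cSUP_subset_mono[OF cdist_le_nonempty[OF assms(2)] bdd_above_alpha_image[OF assms(1)]])
     (use assms(3) in auto)

lemma abs_alpha_diff_le:
  assumes F: "F \<in> Diff1t \<tau>" and G: "G \<in> Diff1t \<tau>" and "0 \<le> \<delta>"
    and close: "\<And>x. \<bar>ln (\<bar>deriv G x\<bar>) - ln (\<bar>deriv F x\<bar>)\<bar> \<le> s"
  shows "\<bar>alpha G \<delta> - alpha F \<delta>\<bar> \<le> 2 * s"
  unfolding alpha_def
proof (rule abs_SUP_diff_le[OF cdist_le_nonempty[OF \<open>0 \<le> \<delta>\<close>] bdd_above_alpha_image[OF G] bdd_above_alpha_image[OF F]])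
  fix xy :: "real \<times> real"
  show "\<bar>\<bar>ln (\<bar>deriv G (fst xy)\<bar> / \<bar>deriv G (snd xy)\<bar>)\<bar> - \<bar>ln (\<bar>deriv F (fst xy)\<bar> / \<bar>deriv F (snd xy)\<bar>)\<bar>\<bar> \<le> 2 * s"
    unfolding abs_ln_deriv_ratio[OF F] abs_ln_deriv_ratio[OF G]
    using close[of "fst xy"] close[of "snd xy"] by (simp add: abs_le_iff) linarith
qed

lemma ln_abs_deriv_uniformly_close:
  assumes F: "F \<in> Diff1t \<tau>" and "e > 0"
  obtains d where "d > 0" and "\<And>x y. cdist x y < d \<Longrightarrow> \<bar>ln (\<bar>deriv F x\<bar>) - ln (\<bar>deriv F y\<bar>)\<bar> < e"
proof -
  define L where "L x = ln \<bar>deriv F x\<bar>" for x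
  have "continuous_on UNIV L"
    unfolding L_def using Diff1t_deriv_nonzero[OF F]
    by (intro continuous_on_ln continuous_intros Diff1t_continuous_deriv[OF F]) auto
  then have "uniformly_continuous_on {-1..2} L"
    by (intro compact_uniformly_continuous) (auto elim: continuous_on_subset)
  then obtain d where d: "d > 0"
    and close: "\<forall>x\<in>{-1..2}. \<forall>y\<in>{-1..2}. dist y x < d \<longrightarrow> dist (L y) (L x) < e"
    unfolding uniformly_continuous_on_def using \<open>e > 0\<close> by blast
  have L_periodic: "L (x + of_int n) = L x" for x n
    unfolding L_def using Diff1t_deriv_plus_of_int[OF F] by simp
  show ?thesis
  proof (rule that[of "min d (1/2)"])
    fix x y assume xy: "cdist x y < min d (1/2)"
    \<comment> \<open>translate the pair by integers into a window where uniform continuity applies\<close>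
    define x' where "x' = x + of_int (- \<lfloor>x\<rfloor>)"
    define y' where "y' = y + of_int (round (x - y) - \<lfloor>x\<rfloor>)"
    have "0 \<le> x'" "x' \<le> 1"
      unfolding x'_def of_int_minus using of_int_floor_le[of x] real_of_int_floor_add_one_gt[of x]
      by linarith+
    moreover have "\<bar>x' - y'\<bar> = cdist x y"
      unfolding x'_def y'_def cdist_def by (simp add: algebra_simps)
    ultimately have "x' \<in> {-1..2}" "y' \<in> {-1..2}" "dist y' x' < d"
      using xy by (auto simp: dist_real_def abs_le_iff abs_minus_commute)
    then have "dist (L y') (L x') < e"
      using close by blast
    then show "\<bar>ln (\<bar>deriv F x\<bar>) - ln (\<bar>deriv F y\<bar>)\<bar> < e"
      unfolding x'_def y'_def L_periodic by (simp add: L_def dist_real_def abs_minus_commute)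
  qed (simp add: d)
qed

lemma alpha_tendsto_zero:
  assumes F: "F \<in> Diff1t \<tau>" and nonneg: "\<And>n. 0 \<le> \<delta> n" and lim: "\<delta> \<longlonglongrightarrow> 0"
  shows "(\<lambda>n. alpha F (\<delta> n)) \<longlonglongrightarrow> 0"
proof (rule order_tendstoI)
  fix a :: real assume "a < 0"
  show "\<forall>\<^sub>F n in sequentially. a < alpha F (\<delta> n)"
    by (intro always_eventually allI less_le_trans[OF \<open>a < 0\<close> alpha_nonneg[OF F nonneg]])
next
  fix a :: real assume "0 < a"
  then obtain d where "d > 0"
    and close: "\<And>x y. cdist x y < d \<Longrightarrow> \<bar>ln (\<bar>deriv F x\<bar>) - ln (\<bar>deriv F y\<bar>)\<bar> < a / 2"
    using ln_abs_deriv_uniformly_close[OF F, of "a / 2"] by auto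
  have small: "alpha F \<delta>' \<le> a / 2" if "0 \<le> \<delta>'" "\<delta>' < d" for \<delta>'
    unfolding alpha_def
  proof (rule cSUP_least[OF cdist_le_nonempty[OF \<open>0 \<le> \<delta>'\<close>]])
    fix xy :: "real \<times> real" assume "xy \<in> {(x, y). cdist x y \<le> \<delta>'}"
    then have "cdist (fst xy) (snd xy) < d" using that by auto
    then show "\<bar>ln (\<bar>deriv F (fst xy)\<bar> / \<bar>deriv F (snd xy)\<bar>)\<bar> \<le> a / 2"
      using close unfolding abs_ln_deriv_ratio[OF F] by (simp add: less_imp_le)
  qed
  have "\<forall>\<^sub>F n in sequentially. \<delta> n < d"
    using order_tendstoD(2)[OF lim \<open>d > 0\<close>] .
  then show "\<forall>\<^sub>F n in sequentially. alpha F (\<delta> n) < a"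
  proof eventually_elim
    case (elim n)
    then have "alpha F (\<delta> n) \<le> a / 2" by (rule small[OF nonneg])
    then show ?case using \<open>0 < a\<close> by linarith
  qed
qed

section \<open>Measurability and integrability of \<open>alpha\<close>\<close>

lemma abs_deriv_diff_le_C1dist:
  assumes F: "F \<in> Diff1t \<tau>" and G: "G \<in> Diff1t \<tau>"
  shows "\<bar>deriv F x - deriv G x\<bar> \<le> C1dist F G"
proof -
  have "\<bar>deriv F x - deriv G x\<bar> = \<bar>deriv F (frac x) - deriv G (frac x)\<bar>"
    using Diff1t_deriv_frac[OF F] Diff1t_deriv_frac[OF G] by simp
  also have "\<dots> \<le> (SUP x\<in>{0..1}. \<bar>deriv F x - deriv G x\<bar>)"
  proof (rule cSUP_upper[OF frac_in_unit_interval], rule bdd_aboveI2)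
    fix y show "\<bar>deriv F y - deriv G y\<bar> \<le> max_abs_deriv F + max_abs_deriv G"
      using abs_deriv_le_max[OF F, of y] abs_deriv_le_max[OF G, of y] by linarith
  qed
  also have "\<dots> \<le> C1dist F G"
  proof -
    have "0 \<le> (SUP x\<in>{0..1}. cdist (F x) (G x))"
      by (rule cSUP_upper2[where x=0]) (auto intro!: bdd_aboveI2 cdist_le_half cdist_nonneg)
    then show ?thesis unfolding C1dist_def by simp
  qed
  finally show ?thesis .
qed

lemma abs_max_abs_deriv_diff_le:
  assumes "F \<in> Diff1t \<tau>" "G \<in> Diff1t \<tau>" and "\<And>x. \<bar>deriv G x - deriv F x\<bar> \<le> r"
  shows "\<bar>max_abs_deriv G - max_abs_deriv F\<bar> \<le> r"
  unfolding max_abs_deriv_def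
proof (rule abs_SUP_diff_le[OF _ bdd_above_abs_deriv[OF assms(2)] bdd_above_abs_deriv[OF assms(1)]])
  show "\<bar>\<bar>deriv G x\<bar> - \<bar>deriv F x\<bar>\<bar> \<le> r" for x
    using assms(3)[of x] by linarith
qed simp

lemma abs_min_abs_deriv_diff_le:
  assumes "\<And>x. \<bar>deriv G x - deriv F x\<bar> \<le> r"
  shows "\<bar>min_abs_deriv G - min_abs_deriv F\<bar> \<le> r"
  unfolding min_abs_deriv_def
proof (rule abs_INF_diff_le[OF _ bdd_below_abs_deriv bdd_below_abs_deriv])
  show "\<bar>\<bar>deriv G x\<bar> - \<bar>deriv F x\<bar>\<bar> \<le> r" for x
    using assms[of x] by linarith
qed simp

lemma abs_alpha_diff_le_deriv:
  assumes F: "F \<in> Diff1t \<tau>" and G: "G \<in> Diff1t \<tau>" and "0 \<le> \<delta>"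
    and r: "r \<le> min_abs_deriv F / 2" and close: "\<And>x. \<bar>deriv G x - deriv F x\<bar> \<le> r"
  shows "\<bar>alpha G \<delta> - alpha F \<delta>\<bar> \<le> 4 * r / min_abs_deriv F"
proof -
  define m where "m = min_abs_deriv F"
  have m: "0 < m" unfolding m_def by (rule min_abs_deriv_pos[OF F])
  have "\<bar>ln (\<bar>deriv G x\<bar>) - ln (\<bar>deriv F x\<bar>)\<bar> \<le> r / (m / 2)" for x
  proof -
    have "m \<le> \<bar>deriv F x\<bar>" unfolding m_def by (rule min_le_abs_deriv)
    then have "\<bar>ln (\<bar>deriv G x\<bar>) - ln (\<bar>deriv F x\<bar>)\<bar> \<le> \<bar>\<bar>deriv G x\<bar> - \<bar>deriv F x\<bar>\<bar> / (m / 2)"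
      using close[of x] m r unfolding m_def[symmetric] by (intro abs_ln_diff_le) auto
    also have "\<dots> \<le> r / (m / 2)"
      using close[of x] m by (intro divide_right_mono) auto
    finally show ?thesis .
  qed
  then have "\<bar>alpha G \<delta> - alpha F \<delta>\<bar> \<le> 2 * (r / (m / 2))"
    by (rule abs_alpha_diff_le[OF F G \<open>0 \<le> \<delta>\<close>])
  then show ?thesis by (simp add: m_def)
qed

context
  fixes \<tau> :: real and \<nu> :: "(real \<Rightarrow> real) measure"
  assumes space_\<nu>: "space \<nu> = Diff1t \<tau>"
    and sets_\<nu>: "sets \<nu> = sigma_sets (Diff1t \<tau>) {U. C1open \<tau> U}"
begin

lemma borel_measurable_C1_continuous:
  fixes g :: "(real \<Rightarrow> real) \<Rightarrow> real"
  assumes cont: "\<And>F e. F \<in> Diff1t \<tau> \<Longrightarrow> e > 0 \<Longrightarrow> \<exists>r>0. \<forall>G\<in>Diff1t \<tau>.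
      (\<forall>x. \<bar>deriv G x - deriv F x\<bar> \<le> r) \<longrightarrow> \<bar>g G - g F\<bar> < e"
  shows "g \<in> borel_measurable \<nu>"
  unfolding borel_measurable_iff_less
proof
  fix a :: real
  have "C1open \<tau> {F\<in>Diff1t \<tau>. g F < a}"
    unfolding C1open_def
  proof (intro conjI ballI)
    fix F assume "F \<in> {F\<in>Diff1t \<tau>. g F < a}"
    then have F: "F \<in> Diff1t \<tau>" and "g F < a" by auto
    then obtain r where "r > 0"
      and r: "\<And>G. G \<in> Diff1t \<tau> \<Longrightarrow> \<forall>x. \<bar>deriv G x - deriv F x\<bar> \<le> r \<Longrightarrow> \<bar>g G - g F\<bar> < a - g F"
      using cont[OF F, of "a - g F"] by auto
    have "G \<in> {F\<in>Diff1t \<tau>. g F < a}" if G: "G \<in> Diff1t \<tau>" and "C1dist F G < r" for G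
    proof -
      have "\<forall>x. \<bar>deriv G x - deriv F x\<bar> \<le> r"
        using abs_deriv_diff_le_C1dist[OF F G] \<open>C1dist F G < r\<close> by (metis abs_minus_commute less_imp_le order_trans)
      then show ?thesis using r[OF G] G by auto
    qed
    with \<open>r > 0\<close> show "\<exists>r>0. \<forall>G\<in>Diff1t \<tau>. C1dist F G < r \<longrightarrow> G \<in> {F\<in>Diff1t \<tau>. g F < a}"
      by blast
  qed auto
  then show "{F \<in> space \<nu>. g F < a} \<in> sets \<nu>"
    unfolding sets_\<nu> space_\<nu> by (intro sigma_sets.Basic) auto
qed

lemma borel_measurable_max_abs_deriv[measurable]: "max_abs_deriv \<in> borel_measurable \<nu>"
proof (rule borel_measurable_C1_continuous)
  fix F :: "real \<Rightarrow> real" and e :: real assume F: "F \<in> Diff1t \<tau>" and "e > 0"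
  show "\<exists>r>0. \<forall>G\<in>Diff1t \<tau>. (\<forall>x. \<bar>deriv G x - deriv F x\<bar> \<le> r) \<longrightarrow>
      \<bar>max_abs_deriv G - max_abs_deriv F\<bar> < e"
  proof (intro exI[of _ "e / 2"] conjI ballI impI)
    fix G assume "G \<in> Diff1t \<tau>" and "\<forall>x. \<bar>deriv G x - deriv F x\<bar> \<le> e / 2"
    then have "\<bar>max_abs_deriv G - max_abs_deriv F\<bar> \<le> e / 2"
      using abs_max_abs_deriv_diff_le[OF F] by blast
    then show "\<bar>max_abs_deriv G - max_abs_deriv F\<bar> < e" using \<open>e > 0\<close> by linarith
  qed (use \<open>e > 0\<close> in simp)
qed

lemma borel_measurable_min_abs_deriv[measurable]: "min_abs_deriv \<in> borel_measurable \<nu>"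
proof (rule borel_measurable_C1_continuous)
  fix F :: "real \<Rightarrow> real" and e :: real assume "e > 0"
  show "\<exists>r>0. \<forall>G\<in>Diff1t \<tau>. (\<forall>x. \<bar>deriv G x - deriv F x\<bar> \<le> r) \<longrightarrow>
      \<bar>min_abs_deriv G - min_abs_deriv F\<bar> < e"
  proof (intro exI[of _ "e / 2"] conjI ballI impI)
    fix G assume "\<forall>x. \<bar>deriv G x - deriv F x\<bar> \<le> e / 2"
    then have "\<bar>min_abs_deriv G - min_abs_deriv F\<bar> \<le> e / 2"
      by (intro abs_min_abs_deriv_diff_le) blast
    then show "\<bar>min_abs_deriv G - min_abs_deriv F\<bar> < e" using \<open>e > 0\<close> by linarith
  qed (use \<open>e > 0\<close> in simp)
qed

lemma borel_measurable_alpha[measurable]: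
  assumes "0 \<le> \<delta>"
  shows "(\<lambda>F. alpha F \<delta>) \<in> borel_measurable \<nu>"
proof (rule borel_measurable_C1_continuous)
  fix F :: "real \<Rightarrow> real" and e :: real assume F: "F \<in> Diff1t \<tau>" and "e > 0"
  define m where "m = min_abs_deriv F"
  have "0 < m" unfolding m_def by (rule min_abs_deriv_pos[OF F])
  define r where "r = min (m / 2) (e * m / 8)"
  have "0 < r" "r \<le> m / 2" "4 * r / m < e"
    using \<open>0 < m\<close> \<open>e > 0\<close> by (auto simp: r_def min_def field_simps)
  show "\<exists>r>0. \<forall>G\<in>Diff1t \<tau>. (\<forall>x. \<bar>deriv G x - deriv F x\<bar> \<le> r) \<longrightarrow> \<bar>alpha G \<delta> - alpha F \<delta>\<bar> < e"
  proof (intro exI[of _ r] conjI ballI impI)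
    fix G assume "G \<in> Diff1t \<tau>" and "\<forall>x. \<bar>deriv G x - deriv F x\<bar> \<le> r"
    then have "\<bar>alpha G \<delta> - alpha F \<delta>\<bar> \<le> 4 * r / m"
      using abs_alpha_diff_le_deriv[OF F _ assms] \<open>r \<le> m / 2\<close> unfolding m_def by blast
    then show "\<bar>alpha G \<delta> - alpha F \<delta>\<bar> < e" using \<open>4 * r / m < e\<close> by linarith
  qed (rule \<open>0 < r\<close>)
qed

context
  assumes ln_max_finite: "(\<integral>\<^sup>+ F. ennreal (ln (SUP x. \<bar>deriv F x\<bar>)) \<partial>\<nu>) < \<infinity>"
    and ln_min_finite: "(\<integral>\<^sup>+ F. ennreal (- ln (INF x. \<bar>deriv F x\<bar>)) \<partial>\<nu>) < \<infinity>"
begin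

lemma integrable_ln_max_min_abs_deriv:
  shows "integrable \<nu> (\<lambda>F. ln (max_abs_deriv F) - ln (min_abs_deriv F))"
proof (rule integrableI_nonneg)
  show "AE F in \<nu>. 0 \<le> ln (max_abs_deriv F) - ln (min_abs_deriv F)"
    using alpha_nonneg alpha_le_ln_max_min by (intro AE_I2) (force simp: space_\<nu>)
  have "(\<integral>\<^sup>+ F. ennreal (ln (max_abs_deriv F) - ln (min_abs_deriv F)) \<partial>\<nu>)
      \<le> (\<integral>\<^sup>+ F. ennreal (ln (max_abs_deriv F)) + ennreal (- ln (min_abs_deriv F)) \<partial>\<nu>)"
  proof (rule nn_integral_mono)
    fix F
    have "ennreal (ln (max_abs_deriv F) - ln (min_abs_deriv F))
        \<le> ennreal (max (ln (max_abs_deriv F)) 0 + max (- ln (min_abs_deriv F)) 0)"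
      by (rule ennreal_leI) linarith
    then show "ennreal (ln (max_abs_deriv F) - ln (min_abs_deriv F))
        \<le> ennreal (ln (max_abs_deriv F)) + ennreal (- ln (min_abs_deriv F))"
      by (simp add: ennreal_plus ennreal_max_0')
  qed
  also have "\<dots> = (\<integral>\<^sup>+ F. ennreal (ln (max_abs_deriv F)) \<partial>\<nu>) + (\<integral>\<^sup>+ F. ennreal (- ln (min_abs_deriv F)) \<partial>\<nu>)"
    by (rule nn_integral_add) auto
  also have "\<dots> < \<infinity>"
    using ln_max_finite ln_min_finite by (simp add: max_abs_deriv_def min_abs_deriv_def)
  finally show "(\<integral>\<^sup>+ F. ennreal (ln (max_abs_deriv F) - ln (min_abs_deriv F)) \<partial>\<nu>) < \<infinity>" .
qed simp

lemma integrable_alpha: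
  assumes "0 \<le> \<delta>"
  shows "integrable \<nu> (\<lambda>F. alpha F \<delta>)"
proof (rule Bochner_Integration.integrable_bound[OF integrable_ln_max_min_abs_deriv])
  show "AE F in \<nu>. norm (alpha F \<delta>) \<le> norm (ln (max_abs_deriv F) - ln (min_abs_deriv F))"
    using alpha_nonneg alpha_le_ln_max_min assms by (intro AE_I2) (force simp: space_\<nu>)
qed (use assms in simp)

lemma integral_alpha_tendsto_zero:
  assumes \<delta>_nonneg: "\<And>n. 0 \<le> \<delta> n" and "\<delta> \<longlonglongrightarrow> 0"
  shows "(\<lambda>n. \<integral>F. alpha F (\<delta> n) \<partial>\<nu>) \<longlonglongrightarrow> 0"
proof -
  have "(\<lambda>n. \<integral>F. alpha F (\<delta> n) \<partial>\<nu>) \<longlonglongrightarrow> (\<integral>F. 0 \<partial>\<nu>)"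
  proof (rule integral_dominated_convergence[OF _ _ integrable_ln_max_min_abs_deriv])
    show "AE F in \<nu>. (\<lambda>n. alpha F (\<delta> n)) \<longlonglongrightarrow> 0"
      using alpha_tendsto_zero assms by (intro AE_I2) (simp add: space_\<nu>)
    show "AE F in \<nu>. norm (alpha F (\<delta> n)) \<le> ln (max_abs_deriv F) - ln (min_abs_deriv F)" for n
      using alpha_nonneg alpha_le_ln_max_min \<delta>_nonneg by (intro AE_I2) (simp add: space_\<nu>)
  qed (use \<delta>_nonneg in simp_all)
  then show ?thesis by simp
qed


lemma AE_partial_sums_alpha_le_linear:
  assumes "prob_space \<nu>" and "0 < \<delta>"
  shows "AE \<omega> in \<Pi>\<^sub>M n\<in>UNIV. \<nu>. \<exists>C. \<forall>\<^sub>F n in sequentially.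
    (\<Sum>j=1..n. alpha (\<omega> j) \<delta>) \<le> C + 2 * real n * ((\<integral>F. alpha F \<delta> \<partial>\<nu>) + \<delta>)"
proof -
  have "nonneg_iid \<nu> (\<lambda>F. alpha F \<delta>)"
  proof (intro nonneg_iid.intro nonneg_iid_axioms.intro assms(1))
    show "(\<lambda>F. alpha F \<delta>) \<in> borel_measurable \<nu>" "integrable \<nu> (\<lambda>F. alpha F \<delta>)"
      using assms(2) by (simp_all add: borel_measurable_alpha integrable_alpha)
    show "0 \<le> alpha F \<delta>" if "F \<in> space \<nu>" for F
      using alpha_nonneg assms(2) that by (simp add: space_\<nu>)
  qed
  then interpret nonneg_iid \<nu> "\<lambda>F. alpha F \<delta>" .
  show ?thesis by (rule AE_partial_sums_le_linear[OF assms(2)])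
qed

end

end

lemma mean_alpha_tendsto_zero:
  fixes \<omega> :: "nat \<Rightarrow> real \<Rightarrow> real" and \<epsilon> \<delta> c :: "nat \<Rightarrow> real"
  assumes \<omega>: "\<And>j. \<omega> j \<in> Diff1t \<tau>"
    and "\<And>n. 0 < \<epsilon> n" "\<epsilon> \<longlonglongrightarrow> 0" "\<And>k. 0 < \<delta> k" "c \<longlonglongrightarrow> 0"
    and "\<forall>k. \<exists>C. \<forall>\<^sub>F n in sequentially. (\<Sum>j=1..n. alpha (\<omega> j) (\<delta> k)) \<le> C + real n * c k"
  shows "(\<lambda>n. (\<Sum>j=1..n. alpha (\<omega> j) (\<epsilon> j)) / real n) \<longlonglongrightarrow> 0"
proof (rule mean_tendsto_zero_of_eventual_bounds[where a="\<lambda>j d. alpha (\<omega> j) d" and \<delta>=\<delta> and c=c])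
  show "0 \<le> alpha (\<omega> j) d" if "0 < d" for j d
    using alpha_nonneg[OF \<omega>] that by simp
  show "alpha (\<omega> j) d \<le> alpha (\<omega> j) d'" if "0 < d" "d \<le> d'" for j d d'
    using alpha_mono[OF \<omega>] that by simp
qed (use assms in auto)

theorem lemma3p1:
  fixes \<tau> :: real and \<nu> :: "(real \<Rightarrow> real) measure"
  assumes "\<tau> > 0"
    and "prob_space \<nu>"
    and "space \<nu> = Diff1t \<tau>"
    and "sets \<nu> = sigma_sets (Diff1t \<tau>) {U. C1open \<tau> U}"
    and "(\<integral>\<^sup>+ F. ennreal (ln (SUP x. \<bar>deriv F x\<bar>)) \<partial>\<nu>) < \<infinity>"
    and "(\<integral>\<^sup>+ F. ennreal (- ln (INF x. \<bar>deriv F x\<bar>)) \<partial>\<nu>) < \<infinity>"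
    and "proximal (semigr (supp \<tau> \<nu>))"
    and "\<not> fixes_point (semigr (supp \<tau> \<nu>))"
  shows "AE \<omega> in (\<Pi>\<^sub>M n\<in>(UNIV::nat set). \<nu>).
           \<forall>\<epsilon>::nat \<Rightarrow> real. (\<forall>n. \<epsilon> n > 0) \<longrightarrow> \<epsilon> \<longlonglongrightarrow> 0 \<longrightarrow>
             (\<lambda>n. (\<Sum>j=1..n. alpha (\<omega> j) (\<epsilon> j)) / real n) \<longlonglongrightarrow> 0"
proof -
  note space_\<nu> = assms(3) and sets_\<nu> = assms(4) and moments = assms(5,6)
  define \<delta> :: "nat \<Rightarrow> real" where "\<delta> k = 1 / real (Suc k)" for k
  define c where "c k = 2 * ((\<integral>F. alpha F (\<delta> k) \<partial>\<nu>) + \<delta> k)" for k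
  have \<delta>_pos: "0 < \<delta> k" for k
    by (simp add: \<delta>_def)
  have \<delta>_lim: "\<delta> \<longlonglongrightarrow> 0"
    unfolding \<delta>_def by (rule LIMSEQ_Suc[OF lim_1_over_n])
  have "c \<longlonglongrightarrow> 2 * (0 + 0)"
    unfolding c_def using \<delta>_pos
    by (intro tendsto_intros \<delta>_lim integral_alpha_tendsto_zero[OF space_\<nu> sets_\<nu> moments] less_imp_le)
  then have c_lim: "c \<longlonglongrightarrow> 0" by simp
  have "AE \<omega> in \<Pi>\<^sub>M n\<in>UNIV. \<nu>. \<forall>k. \<exists>C. \<forall>\<^sub>F n in sequentially.
      (\<Sum>j=1..n. alpha (\<omega> j) (\<delta> k)) \<le> C + real n * c k"
    using AE_partial_sums_alpha_le_linear[OF space_\<nu> sets_\<nu> moments assms(2) \<delta>_pos]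
    by (simp add: AE_all_countable c_def algebra_simps)
  then show ?thesis
    using AE_space
  proof eventually_elim
    case (elim \<omega>)
    then have "\<omega> j \<in> Diff1t \<tau>" for j by (auto simp: space_PiM space_\<nu>)
    with elim(1) \<delta>_pos c_lim show ?case
      by (blast intro: mean_alpha_tendsto_zero)
  qed
qed

end
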